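(* Let $\alpha,\beta,\gamma\in I_{d,n}$, let $R_\alpha=\alpha\setminus\beta$, $S_\alpha=\beta\setminus\alpha$, $R_\gamma=\gamma\setminus\beta$, $S_\gamma=\beta\setminus\gamma$. For a finite multiset $U$ on $\overline\beta\times\beta$ let $x_U=\prod_{(i,j)\in U}x_{ij}$ (with multiplicity). Then $x_U$ does not lie in the ideal $\mathrm{in}\,G_{\alpha,\beta}^\gamma$ if and only if every chain $C$ contained in the underlying set of $U$ satisfies $$R_\alpha-S_\alpha\le C_{(1)}-C_{(2)}\le R_\gamma-S_\gamma .$$ Consequently, $U\mapsto x_U$ is a bijection from the degree-$m$ multisets on $\overline\beta\times\beta$ with this property onto the degree-$m$ monomials of $K[\mathcal{O}_\beta]$ not in $\mathrm{in}\,G_{\alpha,\beta}^\gamma$.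
   Context: $I_{d,n}$ = $d$-subsets of $\{1,\dots,n\}$, ordered by $\alpha\le\theta$ iff $\alpha_i\le\theta_i$ for all $i$ (entries sorted); $\overline\beta=\{1,\dots,n\}\setminus\beta$. $K[\mathcal{O}_\beta]=K[x_{ij}: i\in\overline\beta, j\in\beta]$ is the coordinate ring of the open cell $\{p_\beta\ne0\}$ of $Gr_{d,n}$, identified with $n\times d$ matrices having the identity in rows $\beta$ and free entries $x_{ij}$ in rows $\overline\beta$. $f_{\theta,\beta}=p_\theta/p_\beta$ is $\pm$ the minor of $(x_{ij})$ with rows $\theta\setminus\beta$ and columns $\beta\setminus\theta$. $G_{\alpha,\beta}^\gamma=\{f_{\theta,\beta}\mid\alpha\not\le\theta\text{ or }\theta\not\le\gamma\}$, and $\mathrm{in}\,G_{\alpha,\beta}^\gamma$ is the ideal generated by the initial terms, where the monomial order is chosen so that $\mathrm{in}(f_{\theta,\beta})=x_{r_1s_k}x_{r_2s_{k-1}}\cdots x_{r_ks_1}$ for $\theta\setminus\beta=\{r_1<\dots<r_k\}$, $\beta\setminus\theta=\{s_1<\dots<s_k\}$. A chain is a subset $\{(e_1,f_1),\dots,(e_m,f_m)\}$ ($m\ge0$) of $\mathbb{N}^2$ with $e_1<\dots<e_m$ and $f_1>\dots>f_m$; $C_{(1)},C_{(2)}$ are its sets of first and second coordinates. For finite multisets $A,B,C,D$ of integers with $|A|+|D|=|B|+|C|$, "$A-C\le B-D$" means $A\sqcup D\le B\sqcup C$ in the termwise order (the sorted entries compared pointwise). *)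

theory Defs
  imports Main "HOL-Library.Poly_Mapping" "HOL-Library.Multiset"
begin

definition Idn :: "nat \<Rightarrow> nat \<Rightarrow> nat set set" where
  "Idn d n = {A. A \<subseteq> {1..n} \<and> card A = d}"

definition termwise_le :: "int multiset \<Rightarrow> int multiset \<Rightarrow> bool" where
  "termwise_le A B \<longleftrightarrow> size A = size B \<and>
     (\<forall>i < size A. sorted_list_of_multiset A ! i \<le> sorted_list_of_multiset B ! i)"

definition Ile :: "nat set \<Rightarrow> nat set \<Rightarrow> bool" where
  "Ile A B \<longleftrightarrow> termwise_le (image_mset int (mset_set A)) (image_mset int (mset_set B))"

text \<open>"A - C \<le> B - D" means A + D \<le> B + C termwise (with |A|+|D| = |B|+|C|).\<close>
definition diff_le :: "int multiset \<Rightarrow> int multiset \<Rightarrow> int multiset \<Rightarrow> int multiset \<Rightarrow> bool" where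
  "diff_le A C B D \<longleftrightarrow> size A + size D = size B + size C \<and> termwise_le (A + D) (B + C)"

definition imset :: "nat set \<Rightarrow> int multiset" where
  "imset S = image_mset int (mset_set S)"

definition cbar :: "nat \<Rightarrow> nat set \<Rightarrow> nat set" where
  "cbar n B = {1..n} - B"

type_synonym 'k pol = "((nat \<times> nat) \<Rightarrow>\<^sub>0 nat) \<Rightarrow>\<^sub>0 'k"

definition var :: "nat \<times> nat \<Rightarrow> 'k::comm_ring_1 pol" where
  "var x = Poly_Mapping.single (Poly_Mapping.single x 1) 1"

definition xU :: "(nat \<times> nat) multiset \<Rightarrow> 'k::comm_ring_1 pol" where
  "xU U = prod_mset (image_mset var U)"

definition KO :: "nat \<Rightarrow> nat set \<Rightarrow> 'k::comm_ring_1 pol set" where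
  "KO n B = {p :: 'k pol. \<forall>t \<in> Poly_Mapping.keys p. Poly_Mapping.keys t \<subseteq> cbar n B \<times> B}"

definition ideal_gen_in :: "'k::comm_ring_1 pol set \<Rightarrow> 'k pol set \<Rightarrow> 'k pol set" where
  "ideal_gen_in R G = {p. \<exists>cs gs. length cs = length gs \<and> set cs \<subseteq> R \<and> set gs \<subseteq> G \<and>
      p = (\<Sum>(c, g) \<leftarrow> zip cs gs. c * g)}"

text \<open>Multiset of the initial term of f_{theta,beta}: for theta\beta = {r_1<..<r_k},
  beta\theta = {s_1<..<s_k}, in f = x_{r_1 s_k} x_{r_2 s_{k-1}} ... x_{r_k s_1}.\<close>
definition in_mset :: "nat set \<Rightarrow> nat set \<Rightarrow> (nat \<times> nat) multiset" where
  "in_mset \<theta> B = mset (zip (sorted_list_of_set (\<theta> - B)) (rev (sorted_list_of_set (B - \<theta>))))"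

definition in_f :: "nat set \<Rightarrow> nat set \<Rightarrow> 'k::comm_ring_1 pol" where
  "in_f \<theta> B = xU (in_mset \<theta> B)"

definition inG :: "nat \<Rightarrow> nat \<Rightarrow> nat set \<Rightarrow> nat set \<Rightarrow> nat set \<Rightarrow> 'k::comm_ring_1 pol set" where
  "inG d n \<alpha> B \<gamma> = ideal_gen_in (KO n B)
     {in_f \<theta> B | \<theta>. \<theta> \<in> Idn d n \<and> (\<not> Ile \<alpha> \<theta> \<or> \<not> Ile \<theta> \<gamma>)}"

definition is_chain :: "(nat \<times> nat) set \<Rightarrow> bool" where
  "is_chain C \<longleftrightarrow> (\<exists>ps. C = set ps \<and> sorted_wrt (\<lambda>p q. fst p < fst q \<and> snd p > snd q) ps)"

definition chain_ok :: "nat set \<Rightarrow> nat set \<Rightarrow> nat set \<Rightarrow> (nat \<times> nat) set \<Rightarrow> bool" where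
  "chain_ok \<alpha> B \<gamma> C \<longleftrightarrow>
     diff_le (imset (\<alpha> - B)) (imset (B - \<alpha>)) (imset (fst ` C)) (imset (snd ` C)) \<and>
     diff_le (imset (fst ` C)) (imset (snd ` C)) (imset (\<gamma> - B)) (imset (B - \<gamma>))"

definition good_mset :: "nat set \<Rightarrow> nat set \<Rightarrow> nat set \<Rightarrow> (nat \<times> nat) multiset \<Rightarrow> bool" where
  "good_mset \<alpha> B \<gamma> U \<longleftrightarrow> (\<forall>C. is_chain C \<and> C \<subseteq> set_mset U \<longrightarrow> chain_ok \<alpha> B \<gamma> C)"

definition monomials_deg :: "nat \<Rightarrow> nat set \<Rightarrow> nat \<Rightarrow> 'k::comm_ring_1 pol set" where
  "monomials_deg n B m = {Poly_Mapping.single t 1 | t :: (nat \<times> nat) \<Rightarrow>\<^sub>0 nat. Poly_Mapping.keys t \<subseteq> cbar n B \<times> B \<and>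
      (\<Sum>v \<in> Poly_Mapping.keys t. Poly_Mapping.lookup t v) = m}"

end

theory Submission
  imports Defs
begin

(* The ideal in G^gamma_{alpha,beta} is generated by monomials, so x_U lies in it iff the
   initial term of some f_{theta,beta} with theta outside the interval [alpha, gamma] divides
   x_U. That initial term is the product over a chain with first coordinates theta - beta and
   second coordinates beta - theta; conversely every chain C in cbar beta x beta arises in this
   way from theta = (beta - C_(2)) \<union> C_(1). Under this correspondence alpha \<le> theta \<le> gamma
   is exactly the chain condition: sorted sequences compare termwise iff, for every threshold t,
   the first has at most as many entries \<ge> t as the second, and these counts are additive, so
   the elements common to beta cancel. *)

definition pm_of_mset :: "'a multiset \<Rightarrow> 'a \<Rightarrow>\<^sub>0 nat" where
  "pm_of_mset U = sum_mset (image_mset (\<lambda>x. Poly_Mapping.single x 1) U)"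

definition mset_of_pm :: "('a \<Rightarrow>\<^sub>0 nat) \<Rightarrow> 'a multiset" where
  "mset_of_pm t = Abs_multiset (Poly_Mapping.lookup t)"

lemma lookup_pm_of_mset [simp]: "Poly_Mapping.lookup (pm_of_mset U) = count U"
  by (rule ext, induction U) (auto simp: pm_of_mset_def lookup_add lookup_single when_def)

lemma keys_pm_of_mset [simp]: "Poly_Mapping.keys (pm_of_mset U) = set_mset U"
  by (auto simp: in_keys_iff)

lemma pm_of_mset_inject: "pm_of_mset U = pm_of_mset V \<longleftrightarrow> U = V"
  by (metis lookup_pm_of_mset multiset_eqI)

lemma pm_of_mset_plus: "pm_of_mset (U + V) = pm_of_mset U + pm_of_mset V"
  by (simp add: pm_of_mset_def)

lemma count_mset_of_pm: "count (mset_of_pm t) = Poly_Mapping.lookup t"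
proof -
  have "{x. 0 < Poly_Mapping.lookup t x} = Poly_Mapping.keys t"
    by (auto simp: in_keys_iff)
  then show ?thesis
    unfolding mset_of_pm_def by (subst count_Abs_multiset) auto
qed

lemma pm_of_mset_of_pm [simp]: "pm_of_mset (mset_of_pm t) = t"
  by (rule poly_mapping_eqI) (simp add: count_mset_of_pm)

lemma sum_lookup_pm_of_mset:
  "(\<Sum>v \<in> Poly_Mapping.keys (pm_of_mset U). Poly_Mapping.lookup (pm_of_mset U) v) = size U"
  by (simp add: size_multiset_overloaded_eq)

lemma image_pm_of_mset_size:
  "pm_of_mset ` {U. set_mset U \<subseteq> S \<and> size U = m} =
    {t. Poly_Mapping.keys t \<subseteq> S \<and> (\<Sum>v \<in> Poly_Mapping.keys t. Poly_Mapping.lookup t v) = m}"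
proof (intro equalityI subsetI)
  fix t assume "t \<in> {t. Poly_Mapping.keys t \<subseteq> S \<and> (\<Sum>v \<in> Poly_Mapping.keys t. Poly_Mapping.lookup t v) = m}"
  then show "t \<in> pm_of_mset ` {U. set_mset U \<subseteq> S \<and> size U = m}"
    using sum_lookup_pm_of_mset[of "mset_of_pm t"] keys_pm_of_mset[of "mset_of_pm t"]
    by (intro image_eqI[of _ _ "mset_of_pm t"]) auto
qed (auto simp: size_multiset_overloaded_eq)

lemma xU_eq_single: "(xU U :: 'k::comm_ring_1 pol) = Poly_Mapping.single (pm_of_mset U) 1"
  by (induction U) (simp_all add: xU_def var_def mult_single pm_of_mset_def)

lemma xU_inject: "(xU U :: 'k::comm_ring_1 pol) = xU V \<longleftrightarrow> U = V"
proof -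
  have "Poly_Mapping.keys (xU U :: 'k pol) = {pm_of_mset U}" for U
    by (simp add: xU_eq_single)
  then show ?thesis
    by (metis pm_of_mset_inject singleton_inject)
qed

lemma keys_combination_of_monomials:
  fixes xs :: "('k::comm_ring_1 pol \<times> 'k pol) list"
  assumes "snd ` set xs \<subseteq> xU ` W"
  shows "Poly_Mapping.keys (\<Sum>(c, g) \<leftarrow> xs. c * g) \<subseteq> {u + pm_of_mset V | u V. V \<in> W}"
  using assms
proof (induction xs)
  case Nil
  then show ?case by simp
next
  case (Cons cg xs)
  then obtain c V where cg: "cg = (c, xU V)" "V \<in> W"
    by (cases cg) auto
  have "Poly_Mapping.keys (c * xU V :: 'k pol) \<subseteq> {u + pm_of_mset V | u. True}"
    using keys_mult[of c "xU V"] by (auto simp: xU_eq_single)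
  also have "\<dots> \<subseteq> {u + pm_of_mset V | u V. V \<in> W}"
    using cg(2) by blast
  finally have head: "Poly_Mapping.keys (c * xU V) \<subseteq> {u + pm_of_mset V | u V. V \<in> W}" .
  have tail: "Poly_Mapping.keys (\<Sum>(c, g) \<leftarrow> xs. c * g) \<subseteq> {u + pm_of_mset V | u V. V \<in> W}"
    using Cons by simp
  have "Poly_Mapping.keys (c * xU V + (\<Sum>(c, g) \<leftarrow> xs. c * g))
      \<subseteq> {u + pm_of_mset V | u V. V \<in> W}"
    using keys_add head tail by (meson Un_least order_trans)
  then show ?case
    by (simp add: cg(1))
qed

lemma xU_in_ideal_gen_in_iff:
  assumes U: "set_mset U \<subseteq> cbar n B \<times> B"
  shows "(xU U :: 'k::comm_ring_1 pol) \<in> ideal_gen_in (KO n B) (xU ` W) \<longleftrightarrow> (\<exists>V\<in>W. V \<subseteq># U)"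
proof
  assume "(xU U :: 'k pol) \<in> ideal_gen_in (KO n B) (xU ` W)"
  then obtain cs gs where "length cs = length gs" "set gs \<subseteq> xU ` W"
    and sum: "(xU U :: 'k pol) = (\<Sum>(c, g) \<leftarrow> zip cs gs. c * g)"
    unfolding ideal_gen_in_def by blast
  then have "snd ` set (zip cs gs) \<subseteq> xU ` W"
    by (metis set_map map_snd_zip)
  then have "Poly_Mapping.keys (xU U :: 'k pol) \<subseteq> {u + pm_of_mset V | u V. V \<in> W}"
    unfolding sum by (rule keys_combination_of_monomials)
  then have "pm_of_mset U \<in> {u + pm_of_mset V | u V. V \<in> W}"
    by (simp add: xU_eq_single)
  then obtain u V where "pm_of_mset U = u + pm_of_mset V" "V \<in> W"
    by blast
  then have "U = mset_of_pm u + V" "V \<in> W"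
    by (simp_all flip: pm_of_mset_inject add: pm_of_mset_plus)
  then show "\<exists>V\<in>W. V \<subseteq># U"
    using mset_subset_eq_add_right by blast
next
  assume "\<exists>V\<in>W. V \<subseteq># U"
  then obtain V where V: "V \<in> W" "V \<subseteq># U" by blast
  have "(xU U :: 'k pol) = xU ((U - V) + V)"
    using V(2) by simp
  also have "\<dots> = xU (U - V) * xU V"
    by (simp add: xU_def)
  finally have factor: "(xU U :: 'k pol) = xU (U - V) * xU V" .
  have "set_mset (U - V) \<subseteq> cbar n B \<times> B"
    using U by (meson in_diffD subset_iff)
  then have cofactor: "(xU (U - V) :: 'k pol) \<in> KO n B"
    by (simp add: KO_def xU_eq_single)
  have "(xU U :: 'k pol) = (\<Sum>(c, g) \<leftarrow> zip [xU (U - V)] [xU V]. c * g)"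
    using factor by simp
  moreover have "set [xU V] \<subseteq> (xU ` W :: 'k pol set)"
    using V(1) by simp
  ultimately show "(xU U :: 'k pol) \<in> ideal_gen_in (KO n B) (xU ` W)"
    using cofactor unfolding ideal_gen_in_def mem_Collect_eq
    by (intro exI[of _ "[xU (U - V)]"] exI[of _ "[xU V]"]) simp
qed

lemma sorted_nth_le_iff_count_ge:
  fixes xs ys :: "'a::linorder list"
  assumes sx: "sorted xs" and sy: "sorted ys" and len: "length xs = length ys"
  shows "(\<forall>i<length xs. xs ! i \<le> ys ! i) \<longleftrightarrow>
         (\<forall>t. length (filter ((\<le>) t) xs) \<le> length (filter ((\<le>) t) ys))"
proof
  assume le: "\<forall>i<length xs. xs ! i \<le> ys ! i"
  show "\<forall>t. length (filter ((\<le>) t) xs) \<le> length (filter ((\<le>) t) ys)"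
  proof
    fix t
    have "{i. i < length xs \<and> t \<le> xs ! i} \<subseteq> {i. i < length ys \<and> t \<le> ys ! i}"
      using le len by force
    then show "length (filter ((\<le>) t) xs) \<le> length (filter ((\<le>) t) ys)"
      unfolding length_filter_conv_card by (intro card_mono) auto
  qed
next
  assume count: "\<forall>t. length (filter ((\<le>) t) xs) \<le> length (filter ((\<le>) t) ys)"
  show "\<forall>i<length xs. xs ! i \<le> ys ! i"
  proof (rule ccontr)
    assume "\<not> (\<forall>i<length xs. xs ! i \<le> ys ! i)"
    then obtain i where i: "i < length xs" "ys ! i < xs ! i" by force
    \<comment> \<open>at the threshold \<open>xs ! i\<close>, \<open>xs\<close> has at least \<open>length xs - i\<close> entries, \<open>ys\<close> fewer\<close>
    have "{i..<length xs} \<subseteq> {j. j < length xs \<and> xs ! i \<le> xs ! j}"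
      using sx by (auto intro: sorted_nth_mono)
    from card_mono[OF _ this]
    have "length xs - i \<le> card {j. j < length xs \<and> xs ! i \<le> xs ! j}"
      by simp
    moreover have "{j. j < length ys \<and> xs ! i \<le> ys ! j} \<subseteq> {Suc i..<length xs}"
      using sy i len by (auto simp: not_less_eq_eq dest: sorted_nth_mono[of ys _ i])
    from card_mono[OF _ this]
    have "card {j. j < length ys \<and> xs ! i \<le> ys ! j} \<le> length xs - Suc i"
      by simp
    moreover have "card {j. j < length xs \<and> xs ! i \<le> xs ! j} \<le> card {j. j < length ys \<and> xs ! i \<le> ys ! j}"
      using count unfolding length_filter_conv_card by blast
    ultimately show False
      using i by linarith
  qed
qed

lemma termwise_le_iff_count_ge:
  "termwise_le X Y \<longleftrightarrow> size X = size Y \<and>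
     (\<forall>t. size (filter_mset ((\<le>) t) X) \<le> size (filter_mset ((\<le>) t) Y))"
proof -
  have size_filter: "size (filter_mset P Z) = length (filter P (sorted_list_of_multiset Z))"
    for P and Z :: "int multiset"
    by (metis mset_filter mset_sorted_list_of_multiset size_mset)
  have "length (sorted_list_of_multiset Z) = size Z" for Z :: "int multiset"
    by (metis mset_sorted_list_of_multiset size_mset)
  then show ?thesis
    unfolding termwise_le_def size_filter
    using sorted_nth_le_iff_count_ge[of "sorted_list_of_multiset X" "sorted_list_of_multiset Y"]
    by auto
qed

definition num_ge :: "int \<Rightarrow> nat set \<Rightarrow> nat" where
  "num_ge t S = card {x \<in> S. t \<le> int x}"

lemma size_filter_imset: "finite S \<Longrightarrow> size (filter_mset ((\<le>) t) (imset S)) = num_ge t S"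
  by (simp add: imset_def filter_mset_image_mset num_ge_def)

lemma size_imset: "finite S \<Longrightarrow> size (imset S) = card S"
  by (simp add: imset_def)

lemma num_ge_split: "finite S \<Longrightarrow> num_ge t S = num_ge t (S - B) + num_ge t (S \<inter> B)"
  unfolding num_ge_def
  by (subst card_Un_disjoint[symmetric]) (auto intro: arg_cong[where f = card])

lemma Ile_iff_num_ge:
  "finite A \<Longrightarrow> finite T \<Longrightarrow> Ile A T \<longleftrightarrow> card A = card T \<and> (\<forall>t. num_ge t A \<le> num_ge t T)"
  unfolding Ile_def termwise_le_iff_count_ge
  using size_filter_imset[unfolded imset_def] size_imset[unfolded imset_def]
  by simp

lemma card_Diff_swap:
  "finite A \<Longrightarrow> finite B \<Longrightarrow> card A = card B \<Longrightarrow> card (A - B) = card (B - A)"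
  by (metis card_Diff_subset_Int Int_commute finite_Int)

lemma Ile_iff_diff_le:
  assumes fin: "finite A" "finite B" "finite T" and card: "card A = card B" "card T = card B"
  shows "Ile A T \<longleftrightarrow> diff_le (imset (A - B)) (imset (B - A)) (imset (T - B)) (imset (B - T))"
proof -
  have sizes: "size (imset (A - B)) + size (imset (B - T)) = size (imset (T - B)) + size (imset (B - A))"
    using fin card card_Diff_swap[of A B] card_Diff_swap[of T B] by (simp add: size_imset)
  have "num_ge t A \<le> num_ge t T \<longleftrightarrow>
        num_ge t (A - B) + num_ge t (B - T) \<le> num_ge t (T - B) + num_ge t (B - A)" for t
    using num_ge_split[OF fin(1), of t B] num_ge_split[OF fin(3), of t B]
      num_ge_split[OF fin(2), of t A] num_ge_split[OF fin(2), of t T]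
    by (simp add: Int_commute, linarith)
  then show ?thesis
    unfolding diff_le_def termwise_le_iff_count_ge Ile_iff_num_ge[OF fin(1) fin(3)]
    using sizes fin card by (simp add: size_filter_imset size_imset)
qed

lemma sorted_wrt_zip:
  assumes "sorted_wrt P xs" "sorted_wrt Q ys" "length xs = length ys"
  shows "sorted_wrt (\<lambda>p q. P (fst p) (fst q) \<and> Q (snd p) (snd q)) (zip xs ys)"
  using assms unfolding sorted_wrt_iff_nth_less by auto

lemma in_mset_chain:
  assumes "finite \<theta>" "finite B" "card \<theta> = card B"
  defines "C \<equiv> set_mset (in_mset \<theta> B)"
  shows "is_chain C" "fst ` C = \<theta> - B" "snd ` C = B - \<theta>" "in_mset \<theta> B = mset_set C"
proof -
  define xs where "xs = sorted_list_of_set (\<theta> - B)"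
  define ys where "ys = rev (sorted_list_of_set (B - \<theta>))"
  have len: "length xs = length ys"
    unfolding xs_def ys_def using assms card_Diff_swap by simp
  have C: "C = set (zip xs ys)"
    unfolding C_def in_mset_def xs_def ys_def by simp
  have sx: "sorted_wrt (<) xs"
    unfolding xs_def by simp
  have sy: "sorted_wrt (>) ys"
    unfolding ys_def by (simp add: sorted_wrt_rev)
  show "is_chain C"
    unfolding is_chain_def C using sorted_wrt_zip[OF sx sy len] by blast
  show "fst ` C = \<theta> - B"
    unfolding C using len assms by (metis set_map map_fst_zip xs_def set_sorted_list_of_set finite_Diff)
  show "snd ` C = B - \<theta>"
    unfolding C using len assms by (metis set_map map_snd_zip ys_def set_rev set_sorted_list_of_set finite_Diff)
  have "distinct (zip xs ys)"
    using sx by (simp add: distinct_zipI1 strict_sorted_iff)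
  then show "in_mset \<theta> B = mset_set C"
    unfolding C by (simp add: mset_set_set in_mset_def xs_def ys_def)
qed

lemma chain_in_mset:
  assumes chain: "is_chain C" and sub: "C \<subseteq> cbar n B \<times> B" and B: "B \<in> Idn d n"
  defines "\<theta> \<equiv> (B - snd ` C) \<union> fst ` C"
  shows "\<theta> \<in> Idn d n" "\<theta> - B = fst ` C" "B - \<theta> = snd ` C" "in_mset \<theta> B = mset_set C"
proof -
  obtain ps where ps: "C = set ps" "sorted_wrt (\<lambda>p q. fst p < fst q \<and> snd p > snd q) ps"
    using chain unfolding is_chain_def by blast
  have sx: "sorted_wrt (<) (map fst ps)" and sy: "sorted_wrt (>) (map snd ps)"
    using ps(2) by (auto simp: sorted_wrt_map elim: sorted_wrt_mono_rel[rotated])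
  have dx: "distinct (map fst ps)"
    using sx by (simp add: strict_sorted_iff)
  have dy: "distinct (map snd ps)"
    using sy by (metis distinct_rev sorted_wrt_rev strict_sorted_iff)
  have disj: "fst ` C \<inter> B = {}" and snd_sub: "snd ` C \<subseteq> B" and fst_sub: "fst ` C \<subseteq> {1..n}"
    using sub by (auto simp: cbar_def)
  have B_sub: "B \<subseteq> {1..n}" and card_B: "card B = d" and fin_B: "finite B"
    using B by (auto simp: Idn_def intro: finite_subset)
  show fst_C: "\<theta> - B = fst ` C" and snd_C: "B - \<theta> = snd ` C"
    unfolding \<theta>_def using disj snd_sub by auto
  have "card (fst ` C) = card (snd ` C)"
    using dx dy ps(1) by (metis distinct_card length_map set_map)
  moreover have "card \<theta> = card (B - snd ` C) + card (fst ` C)"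
    unfolding \<theta>_def using disj fin_B ps(1) by (intro card_Un_disjoint) auto
  moreover have "card (B - snd ` C) = card B - card (snd ` C)" "card (snd ` C) \<le> card B"
    using snd_sub fin_B by (simp_all add: card_Diff_subset finite_subset card_mono)
  ultimately have "card \<theta> = d"
    using card_B by simp
  moreover have "\<theta> \<subseteq> {1..n}"
    unfolding \<theta>_def using B_sub fst_sub by blast
  ultimately show "\<theta> \<in> Idn d n"
    unfolding Idn_def by blast
  have sorted_list_of_set_strict: "sorted_list_of_set (set xs) = xs" if "sorted_wrt (<) xs"
    for xs :: "nat list"
    using that by (simp add: sorted_list_of_set_sort_remdups strict_sorted_iff distinct_remdups_id sorted_sort_id)
  have "sorted_list_of_set (\<theta> - B) = map fst ps"
    unfolding fst_C ps(1) using sx by (simp flip: set_map add: sorted_list_of_set_strict)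
  moreover have "sorted_list_of_set (B - \<theta>) = rev (map snd ps)"
    unfolding snd_C ps(1) using sy sorted_list_of_set_strict[of "rev (map snd ps)"]
    by (simp add: sorted_wrt_rev)
  moreover have "distinct ps"
    using dx by (simp add: distinct_map)
  ultimately show "in_mset \<theta> B = mset_set C"
    unfolding in_mset_def using ps(1) by (simp add: zip_map_fst_snd mset_set_set)
qed

lemma chain_ok_iff_Ile:
  assumes "\<alpha> \<in> Idn d n" "B \<in> Idn d n" "\<gamma> \<in> Idn d n" "\<theta> \<in> Idn d n"
    and "fst ` C = \<theta> - B" "snd ` C = B - \<theta>"
  shows "chain_ok \<alpha> B \<gamma> C \<longleftrightarrow> Ile \<alpha> \<theta> \<and> Ile \<theta> \<gamma>"
proof -
  have "finite S" "card S = d" if "S \<in> Idn d n" for S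
    using that by (auto simp: Idn_def intro: finite_subset)
  then show ?thesis
    unfolding chain_ok_def assms(5,6)
    using assms(1-4) Ile_iff_diff_le[of \<alpha> B \<theta>] Ile_iff_diff_le[of \<theta> B \<gamma>]
    by simp
qed

lemma not_good_mset_iff_bad_initial_term_dvd:
  assumes \<alpha>: "\<alpha> \<in> Idn d n" and \<beta>: "\<beta> \<in> Idn d n" and \<gamma>: "\<gamma> \<in> Idn d n"
    and U: "set_mset U \<subseteq> cbar n \<beta> \<times> \<beta>"
  shows "\<not> good_mset \<alpha> \<beta> \<gamma> U \<longleftrightarrow>
    (\<exists>\<theta>\<in>Idn d n. \<not> (Ile \<alpha> \<theta> \<and> Ile \<theta> \<gamma>) \<and> in_mset \<theta> \<beta> \<subseteq># U)"
proof
  assume "\<not> good_mset \<alpha> \<beta> \<gamma> U"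
  then obtain C where C: "is_chain C" "C \<subseteq> set_mset U" "\<not> chain_ok \<alpha> \<beta> \<gamma> C"
    unfolding good_mset_def by blast
  then have "C \<subseteq> cbar n \<beta> \<times> \<beta>"
    using U by blast
  define \<theta> where "\<theta> = (\<beta> - snd ` C) \<union> fst ` C"
  note \<theta> = chain_in_mset[OF C(1) \<open>C \<subseteq> cbar n \<beta> \<times> \<beta>\<close> \<beta>, folded \<theta>_def]
  have "mset_set C \<subseteq># mset_set (set_mset U)"
    using C(2) by (rule subset_imp_msubset_mset_set) simp
  also have "\<dots> \<subseteq># U"
    by (rule mset_set_set_mset_msubset)
  finally have "in_mset \<theta> \<beta> \<subseteq># U"
    unfolding \<theta>(4) .
  moreover have "\<not> (Ile \<alpha> \<theta> \<and> Ile \<theta> \<gamma>)"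
    using chain_ok_iff_Ile[OF \<alpha> \<beta> \<gamma> \<theta>(1) \<theta>(2,3)[symmetric]] C(3) by simp
  ultimately show "\<exists>\<theta>\<in>Idn d n. \<not> (Ile \<alpha> \<theta> \<and> Ile \<theta> \<gamma>) \<and> in_mset \<theta> \<beta> \<subseteq># U"
    using \<theta>(1) by blast
next
  assume "\<exists>\<theta>\<in>Idn d n. \<not> (Ile \<alpha> \<theta> \<and> Ile \<theta> \<gamma>) \<and> in_mset \<theta> \<beta> \<subseteq># U"
  then obtain \<theta> where \<theta>: "\<theta> \<in> Idn d n" "\<not> (Ile \<alpha> \<theta> \<and> Ile \<theta> \<gamma>)" "in_mset \<theta> \<beta> \<subseteq># U"
    by blast
  have "finite \<theta>" "finite \<beta>" "card \<theta> = card \<beta>"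
    using \<theta>(1) \<beta> by (auto simp: Idn_def intro: finite_subset)
  note C = in_mset_chain[OF this]
  have "\<not> chain_ok \<alpha> \<beta> \<gamma> (set_mset (in_mset \<theta> \<beta>))"
    using chain_ok_iff_Ile[OF \<alpha> \<beta> \<gamma> \<theta>(1) C(2,3)] \<theta>(2) by blast
  moreover have "set_mset (in_mset \<theta> \<beta>) \<subseteq> set_mset U"
    using \<theta>(3) by (rule set_mset_mono)
  ultimately show "\<not> good_mset \<alpha> \<beta> \<gamma> U"
    using C(1) unfolding good_mset_def by blast
qed

lemma xU_notin_inG_iff_good_mset:
  assumes \<alpha>: "\<alpha> \<in> Idn d n" and \<beta>: "\<beta> \<in> Idn d n" and \<gamma>: "\<gamma> \<in> Idn d n"
    and U: "set_mset U \<subseteq> cbar n \<beta> \<times> \<beta>"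
  shows "(xU U :: 'k::comm_ring_1 pol) \<notin> inG d n \<alpha> \<beta> \<gamma> \<longleftrightarrow> good_mset \<alpha> \<beta> \<gamma> U"
proof -
  have "(inG d n \<alpha> \<beta> \<gamma> :: 'k pol set) = ideal_gen_in (KO n \<beta>)
      (xU ` {in_mset \<theta> \<beta> | \<theta>. \<theta> \<in> Idn d n \<and> \<not> (Ile \<alpha> \<theta> \<and> Ile \<theta> \<gamma>)})"
    unfolding inG_def in_f_def by (rule arg_cong[of _ _ "ideal_gen_in _"]) blast
  then have "(xU U :: 'k pol) \<in> inG d n \<alpha> \<beta> \<gamma> \<longleftrightarrow>
      (\<exists>V \<in> {in_mset \<theta> \<beta> | \<theta>. \<theta> \<in> Idn d n \<and> \<not> (Ile \<alpha> \<theta> \<and> Ile \<theta> \<gamma>)}. V \<subseteq># U)"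
    by (simp only: xU_in_ideal_gen_in_iff[OF U])
  also have "\<dots> \<longleftrightarrow> (\<exists>\<theta>\<in>Idn d n. \<not> (Ile \<alpha> \<theta> \<and> Ile \<theta> \<gamma>) \<and> in_mset \<theta> \<beta> \<subseteq># U)"
    by blast
  also have "\<dots> \<longleftrightarrow> \<not> good_mset \<alpha> \<beta> \<gamma> U"
    by (rule not_good_mset_iff_bad_initial_term_dvd[OF \<alpha> \<beta> \<gamma> U, symmetric])
  finally show ?thesis
    by blast
qed

lemma xU_bij_monomials_deg:
  "bij_betw (xU :: (nat \<times> nat) multiset \<Rightarrow> 'k::comm_ring_1 pol)
     {U. set_mset U \<subseteq> cbar n B \<times> B \<and> size U = m} (monomials_deg n B m)"
proof (rule bij_betw_imageI)
  show "inj_on (xU :: _ \<Rightarrow> 'k pol) {U. set_mset U \<subseteq> cbar n B \<times> B \<and> size U = m}"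
    by (simp add: inj_on_def xU_inject)
  have "monomials_deg n B m =
      (\<lambda>t. Poly_Mapping.single t 1) ` pm_of_mset ` {U. set_mset U \<subseteq> cbar n B \<times> B \<and> size U = m}"
    unfolding monomials_deg_def image_pm_of_mset_size by blast
  also have "\<dots> = xU ` {U. set_mset U \<subseteq> cbar n B \<times> B \<and> size U = m}"
    unfolding image_image by (rule image_cong) (simp_all add: xU_eq_single)
  finally show "xU ` {U. set_mset U \<subseteq> cbar n B \<times> B \<and> size U = m} = (monomials_deg n B m :: 'k pol set)"
    by (rule sym)
qed

theorem lemma8p3:
  fixes \<alpha> \<beta> \<gamma> :: "nat set" and d n :: nat
  assumes "\<alpha> \<in> Idn d n" and "\<beta> \<in> Idn d n" and "\<gamma> \<in> Idn d n"
  shows "(\<forall>U. set_mset U \<subseteq> cbar n \<beta> \<times> \<beta> \<longrightarrow>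
           ((xU U :: 'k::field pol) \<notin> inG d n \<alpha> \<beta> \<gamma> \<longleftrightarrow> good_mset \<alpha> \<beta> \<gamma> U)) \<and>
         (\<forall>m. bij_betw (xU :: (nat \<times> nat) multiset \<Rightarrow> 'k::field pol)
           {U. set_mset U \<subseteq> cbar n \<beta> \<times> \<beta> \<and> size U = m \<and> good_mset \<alpha> \<beta> \<gamma> U}
           (monomials_deg n \<beta> m - inG d n \<alpha> \<beta> \<gamma>))"
proof (intro conjI allI impI)
  fix U :: "(nat \<times> nat) multiset"
  assume "set_mset U \<subseteq> cbar n \<beta> \<times> \<beta>"
  then show "(xU U :: 'k pol) \<notin> inG d n \<alpha> \<beta> \<gamma> \<longleftrightarrow> good_mset \<alpha> \<beta> \<gamma> U"
    by (rule xU_notin_inG_iff_good_mset[OF assms])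
next
  fix m
  have "bij_betw (xU :: _ \<Rightarrow> 'k pol)
      {U \<in> {U. set_mset U \<subseteq> cbar n \<beta> \<times> \<beta> \<and> size U = m}. good_mset \<alpha> \<beta> \<gamma> U}
      {p \<in> monomials_deg n \<beta> m. p \<notin> inG d n \<alpha> \<beta> \<gamma>}"
    by (rule bij_betw_Collect[OF xU_bij_monomials_deg]) (simp add: xU_notin_inG_iff_good_mset[OF assms])
  then show "bij_betw (xU :: _ \<Rightarrow> 'k pol)
      {U. set_mset U \<subseteq> cbar n \<beta> \<times> \<beta> \<and> size U = m \<and> good_mset \<alpha> \<beta> \<gamma> U}
      (monomials_deg n \<beta> m - inG d n \<alpha> \<beta> \<gamma>)"
    by (simp add: set_diff_eq)
qed

end
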